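(* For $n\ge0$ let $Q_n^L(x)=\sum_{r=0}^{n}\left[\binom{n}{r}\sum_{\ell=0}^{r}\binom{r}{\ell}\frac{1}{\ell!}\right](-x)^r$ be the coefficient polynomials of the linear transformation $x^n\mapsto L_n(x)$. Then, as formal power series in $w$, $$\frac{\exp\left(-\frac{wx}{w(x-1)+1}\right)}{w(x-1)+1}=\sum_{n=0}^\infty Q_n^L(x)w^n.$$
   Context: $L_n(x)=\sum_{k=0}^n\binom{n}{k}\frac{(-x)^k}{k!}$ is the $n$th Laguerre polynomial; coefficient polynomials $Q_k$ of a linear operator $T$ on $\mathbb{C}[x]$ are defined by the unique representation $T=\sum_k\frac{Q_k(x)}{k!}D^k$, $D=d/dx$. *)

theory Defs
  imports Complex_Main "HOL-Computational_Algebra.Formal_Power_Series" "HOL-Computational_Algebra.Polynomial"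
begin

definition QL :: "nat \<Rightarrow> complex poly" where
  "QL n = (\<Sum>r=0..n. smult (of_nat (n choose r) * (\<Sum>l=0..r. of_nat (r choose l) / of_nat (fact l))) ([:0, -1:] ^ r))"

end

theory Submission
  imports Defs
begin

(* With D = 1 - (1 - x) w one has 1/D = sum_n (1 - x)^n w^n, and the argument of exp is
   -x w / D.  Expanding exp termwise, the l-th term contributes (-x)^l / l! times the
   coefficient of w^(n-l) in D^(-l-1), namely binom(n,l) (1 - x)^(n-l).  With c = -x, the
   identity sum_r binom(n,r) binom(r,l) c^r = binom(n,l) c^l (1 + c)^(n-l), which is the
   binomial theorem after writing binom(n,r) binom(r,l) = binom(n,l) binom(n-l,r-l),
   turns the resulting sum into Q_n^L(x). *)

unbundle fps_syntax

lemma one_minus_const_fps_X_mult_geometric: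
  fixes b :: "'a::comm_ring_1"
  shows "(1 - fps_const b * fps_X) * Abs_fps (\<lambda>n. b ^ n) = 1"
proof (rule fps_ext)
  fix n
  have "(1 - fps_const b * fps_X) * Abs_fps (\<lambda>n. b ^ n)
      = Abs_fps (\<lambda>n. b ^ n) - fps_X * (fps_const b * Abs_fps (\<lambda>n. b ^ n))"
    by (simp add: algebra_simps)
  then show "((1 - fps_const b * fps_X) * Abs_fps (\<lambda>n. b ^ n)) $ n = (1 :: 'a fps) $ n"
    by (cases n) (simp_all add: fps_X_mult_nth)
qed

lemma geometric_fps_power_nth:
  fixes b :: "'a::comm_semiring_1"
  shows "(Abs_fps (\<lambda>n. b ^ n) ^ Suc k) $ m = of_nat ((k + m) choose m) * b ^ m"
proof (induction k arbitrary: m)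
  case 0
  then show ?case by simp
next
  case (Suc k)
  have "(Abs_fps (\<lambda>n. b ^ n) ^ Suc (Suc k)) $ m
      = (\<Sum>i=0..m. of_nat ((k + i) choose i) * b ^ i * b ^ (m - i))"
    by (simp only: power_Suc2[of _ "Suc k"] fps_mult_nth Suc.IH fps_nth_Abs_fps)
  also have "\<dots> = (\<Sum>i\<le>m. of_nat ((k + i) choose i)) * b ^ m"
    by (auto simp: sum_distrib_right atLeast0AtMost mult.assoc power_add[symmetric] intro!: sum.cong)
  also have "(\<Sum>i\<le>m. of_nat ((k + i) choose i)) = (of_nat ((Suc k + m) choose m) :: 'a)"
    by (simp only: of_nat_sum[symmetric] sum_choose_lower) simp
  finally show ?case .
qed

lemma fps_compose_mult_nth:
  fixes a g h :: "'a::comm_semiring_1 fps"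
  assumes "g $ 0 = 0"
  shows "((a oo g) * h) $ n = (\<Sum>i=0..n. a $ i * (g ^ i * h) $ n)"
proof -
  have "((a oo g) * h) $ n = (\<Sum>j=0..n. \<Sum>i=0..j. a $ i * (g ^ i $ j) * h $ (n - j))"
    by (simp add: fps_mult_nth fps_compose_nth sum_distrib_right)
  also have "\<dots> = (\<Sum>j=0..n. \<Sum>i=0..n. a $ i * (g ^ i $ j) * h $ (n - j))"
    using startsby_zero_power_prefix[OF assms]
    by (intro sum.cong refl sum.mono_neutral_left) auto
  also have "\<dots> = (\<Sum>i=0..n. a $ i * (g ^ i * h) $ n)"
    by (subst sum.swap) (simp add: fps_mult_nth sum_distrib_left mult.assoc)
  finally show ?thesis .
qed

lemma sum_choose_mult_choose_power:
  fixes c :: "'a::comm_semiring_1"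
  assumes "l \<le> n"
  shows "(\<Sum>r=0..n. of_nat (n choose r) * of_nat (r choose l) * c ^ r)
       = of_nat (n choose l) * c ^ l * (1 + c) ^ (n - l)"
proof -
  have "(\<Sum>r=0..n. of_nat (n choose r) * of_nat (r choose l) * c ^ r)
      = (\<Sum>r=l..n. of_nat (n choose l) * c ^ l * (of_nat ((n - l) choose (r - l)) * c ^ (r - l)))"
  proof (rule sum.mono_neutral_cong_right)
    fix r assume "r \<in> {l..n}"
    then have "(n choose r) * (r choose l) = (n choose l) * ((n - l) choose (r - l))"
      and "c ^ r = c ^ l * c ^ (r - l)"
      by (auto simp: choose_mult power_add[symmetric])
    then show "of_nat (n choose r) * of_nat (r choose l) * c ^ r
        = of_nat (n choose l) * c ^ l * (of_nat ((n - l) choose (r - l)) * c ^ (r - l))"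
      by (metis (no_types, lifting) mult.assoc mult.left_commute of_nat_mult)
  qed (auto simp: binomial_eq_0)
  also have "\<dots> = of_nat (n choose l) * c ^ l * (\<Sum>j=0..n-l. of_nat ((n - l) choose j) * c ^ j)"
    using assms by (simp add: sum.atLeastAtMost_shift_0[of l n] sum_distrib_left comp_def)
  also have "\<dots> = of_nat (n choose l) * c ^ l * (1 + c) ^ (n - l)"
    by (simp add: binomial_ring[of c 1] atLeast0AtMost add.commute[of 1 c])
  finally show ?thesis .
qed

lemma poly_QL:
  "poly (QL n) x = (\<Sum>l=0..n. of_nat (n choose l) / of_nat (fact l) * (-x) ^ l * (1 - x) ^ (n - l))"
proof -
  have "poly (QL n) x
      = (\<Sum>r=0..n. \<Sum>l=0..n. of_nat (n choose r) * of_nat (r choose l) * (-x) ^ r / of_nat (fact l))"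
    unfolding QL_def poly_sum
  proof (intro sum.cong refl)
    fix r assume "r \<in> {0..n}"
    then have "(\<Sum>l=0..r. of_nat (r choose l) / of_nat (fact l))
        = (\<Sum>l=0..n. of_nat (r choose l) / (of_nat (fact l) :: complex))"
      by (intro sum.mono_neutral_left) (auto simp: binomial_eq_0)
    then show "poly (smult (of_nat (n choose r) * (\<Sum>l=0..r. of_nat (r choose l) / of_nat (fact l)))
          ([:0, - 1:] ^ r)) x
        = (\<Sum>l=0..n. of_nat (n choose r) * of_nat (r choose l) * (-x) ^ r / of_nat (fact l))"
      by (simp add: poly_power sum_distrib_left sum_distrib_right sum_divide_distrib mult_ac)
  qed
  also have "\<dots> = (\<Sum>l=0..n. (\<Sum>r=0..n. of_nat (n choose r) * of_nat (r choose l) * (-x) ^ r) / of_nat (fact l))"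
    by (subst sum.swap) (simp add: sum_divide_distrib)
  also have "\<dots> = (\<Sum>l=0..n. of_nat (n choose l) / of_nat (fact l) * (-x) ^ l * (1 - x) ^ (n - l))"
    by (intro sum.cong refl) (simp add: sum_choose_mult_choose_power)
  finally show ?thesis .
qed

theorem theorem6p1:
  fixes x :: complex
  shows "(fps_exp 1 oo (- (fps_X * fps_const x) / (fps_X * fps_const (x - 1) + 1)))
           / (fps_X * fps_const (x - 1) + 1)
         = Abs_fps (\<lambda>n. poly (QL n) x)" (is "?lhs = ?rhs")
proof (rule fps_ext)
  fix n
  define D where "D = 1 - fps_const (1 - x) * fps_X"
  define H where "H = Abs_fps (\<lambda>n. (1 - x) ^ n)"
  have D_eq: "fps_X * fps_const (x - 1) + 1 = D"
    by (simp add: D_def fps_eq_iff fps_X_mult_nth)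
  have D0: "D $ 0 \<noteq> 0"
    by (simp add: D_def)
  have inverse_D: "inverse D = H"
    unfolding D_def H_def by (rule fps_inverse_unique) (rule one_minus_const_fps_X_mult_geometric)
  define G where "G = fps_X * (fps_const (- x) * H)"
  have argument: "- (fps_X * fps_const x) / D = G"
    by (simp add: G_def fps_divide_unit[OF D0] inverse_D algebra_simps flip: fps_const_neg)
  have power_argument: "G ^ i * H = fps_X ^ i * (fps_const ((- x) ^ i) * H ^ Suc i)"
    for i by (simp add: G_def power_mult_distrib fps_const_power mult_ac)
  have "(G ^ i * H) $ n = of_nat (n choose i) * (- x) ^ i * (1 - x) ^ (n - i)"
    if "i \<le> n" for i
    using that unfolding power_argument fps_X_power_mult_nth fps_const_mult_apply_left
    by (simp add: H_def geometric_fps_power_nth binomial_symmetric[of i n, symmetric] del: power_Suc)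
  moreover have "G $ 0 = 0"
    by (simp add: G_def)
  ultimately have "((fps_exp 1 oo G) * H) $ n
      = (\<Sum>l=0..n. of_nat (n choose l) / of_nat (fact l) * (-x) ^ l * (1 - x) ^ (n - l))"
    by (simp add: fps_compose_mult_nth fps_exp_nth)
  then show "?lhs $ n = ?rhs $ n"
    unfolding D_eq argument unfolding fps_divide_unit[OF D0] inverse_D by (simp add: poly_QL)
qed

end
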